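(* Let $\beta_2,\beta_3,\delta_1,\delta_2,\delta_3,\mu_1,\mu_2,\eta,K_1,K_2,K_3$ be positive real numbers and consider the system of ordinary differential equations \[ \begin{aligned} \dot{H} &= - \delta_1 H - \eta SH + \mu_1C\left(1-\frac{H}{K_1}\right), \\ \dot{S} &= \beta_2 S \left(1-\frac{S}{K_2}\right) - \delta_2 S - \eta S H + \mu_2 C \left(1-\frac{S}{K_2}\right), \\ \dot{C} &= \beta_3 C \left(1-\frac{C}{K_3}\right) - \delta_3 C + \eta S H \end{aligned} \] on $\mathbb{R}^3$. Let \[ \tilde{K}_3 := \frac{1}{2} \left( \frac{\beta_3 - \delta_3}{\beta_3} K_3 + \sqrt{\left(\frac{\beta_3-\delta_3}{\beta_3}\right)^2 K_3^2 + 8\frac{\eta}{\beta_3} K_1 K_2K_3} \right) \] and $D=[0, K_1] \times [0, K_2] \times [0, \tilde{K}_3]$. Then $D$ is positively invariant under this system, i.e.\ every solution $(H,S,C)(t)$ with $(H,S,C)(0)\in D$ satisfies $(H,S,C)(t)\in D$ for all $t\ge 0$ in its interval of existence.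
   Context: The system is a population model (mycobiont host $H$, photobiont symbiont $S$, lichen complex $C$) in which all parameters are birth, death, formation rates and carrying capacities. *)

theory Defs
  imports "HOL-Analysis.Analysis"
begin

definition K3tilde :: "real \<Rightarrow> real \<Rightarrow> real \<Rightarrow> real \<Rightarrow> real \<Rightarrow> real \<Rightarrow> real" where
  "K3tilde \<beta>\<^sub>3 \<delta>\<^sub>3 \<eta> K\<^sub>1 K\<^sub>2 K\<^sub>3 =
     (1/2) * ((\<beta>\<^sub>3 - \<delta>\<^sub>3) / \<beta>\<^sub>3 * K\<^sub>3
       + sqrt (((\<beta>\<^sub>3 - \<delta>\<^sub>3) / \<beta>\<^sub>3)\<^sup>2 * K\<^sub>3\<^sup>2 + 8 * (\<eta> / \<beta>\<^sub>3) * K\<^sub>1 * K\<^sub>2 * K\<^sub>3))"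

end

theory Submission
  imports Defs
begin

(* Positive invariance of D is a barrier argument for the six signed distances of the solution
   from the faces of D, namely H, K1 - H, S, K2 - S, C and K3tilde - C. The vector field points
   inward up to an error linear in the distance: when one distance equals -e and none is below -e,
   its derivative is at least -c e. Adding \<epsilon> exp (L t) with L > c to every distance makes them
   all positive at t = 0; at the first time one of them vanishes its derivative would have to be
   nonpositive, whereas the estimate makes it at least (L - c) \<epsilon> exp (L t) > 0. Letting
   \<epsilon> \<rightarrow> 0 gives nonnegativity. Only the face C = K3tilde uses the value of K3tilde: there
   the net growth \<beta>3 C (1 - C/K3) - \<delta>3 C equals -2 \<eta> K1 K2, which outweighs the formation
   term \<eta> S H \<le> \<eta> K1 K2. *)

lemma first_zero_of_finite_family:
  fixes f :: "'i \<Rightarrow> real \<Rightarrow> real"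
  assumes "finite I" and cont: "\<And>i. i \<in> I \<Longrightarrow> continuous_on {0..T} (f i)"
    and start: "\<And>i. i \<in> I \<Longrightarrow> f i 0 > 0"
    and hit: "i\<^sub>0 \<in> I" "t\<^sub>0 \<in> {0..T}" "f i\<^sub>0 t\<^sub>0 \<le> 0"
  obtains t\<^sub>1 i where "t\<^sub>1 \<in> {0<..T}" "i \<in> I" "f i t\<^sub>1 = 0"
    "\<And>j. j \<in> I \<Longrightarrow> f j t\<^sub>1 \<ge> 0"
    "\<And>j s. j \<in> I \<Longrightarrow> s \<in> {0..<t\<^sub>1} \<Longrightarrow> f j s > 0"
proof -
  define Z where "Z = (\<Union>i\<in>I. {0..T} \<inter> f i -` {..0})"
  have "closed Z"
    unfolding Z_def using \<open>finite I\<close> by (intro closed_UN) (auto intro: continuous_closed_preimage cont)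
  moreover have "t\<^sub>0 \<in> Z" using hit by (auto simp: Z_def)
  then have "Z \<noteq> {}" by blast
  moreover have bdd: "bdd_below Z" by (auto simp: Z_def intro!: bdd_belowI[of _ 0])
  ultimately have "Inf Z \<in> Z" by (rule closed_contains_Inf[rotated 2])
  then obtain i where i: "i \<in> I" "Inf Z \<in> {0..T}" "f i (Inf Z) \<le> 0"
    by (auto simp: Z_def)
  have before: "f j s > 0" if "j \<in> I" "s \<in> {0..<Inf Z}" for j s
  proof (rule ccontr)
    assume "\<not> f j s > 0"
    with that i have "s \<in> Z" unfolding Z_def by (auto simp: not_less)
    then have "Inf Z \<le> s" using bdd by (rule cInf_lower)
    with that show False by simp
  qed
  have "Inf Z \<noteq> 0" using i start by force
  with i have pos: "Inf Z \<in> {0<..T}" by auto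
  have at: "f j (Inf Z) \<ge> 0" if j: "j \<in> I" for j
  proof (rule ccontr)
    assume neg: "\<not> f j (Inf Z) \<ge> 0"
    have "continuous_on {0..Inf Z} (f j)"
      using cont[OF j] by (rule continuous_on_subset) (use pos in auto)
    then obtain x where "x \<in> {0..Inf Z}" "f j x = 0"
      using IVT2'[of "f j" "Inf Z" 0 0] neg start[OF j] pos by auto
    with before[OF j, of x] neg show False by (cases "x = Inf Z") auto
  qed
  show thesis
    using that[OF pos i(1)] i(3) at[OF i(1)] at before by fastforce
qed

lemma has_real_derivative_nonpos_at_first_zero:
  fixes f :: "real \<Rightarrow> real"
  assumes deriv: "(f has_real_derivative D) (at t within J)"
    and "{a..t} \<subseteq> J" "a < t" "f t = 0" and before: "\<And>s. s \<in> {a..<t} \<Longrightarrow> f s > 0"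
  shows "D \<le> 0"
proof -
  have "(f has_real_derivative D) (at t within {a..t})"
    using deriv \<open>{a..t} \<subseteq> J\<close> by (rule DERIV_subset)
  then have "((\<lambda>y. (f y - f t) / (y - t)) \<longlongrightarrow> D) (at_left t)"
    using at_within_Icc_at_left[OF \<open>a < t\<close>] by (simp add: has_field_derivative_iff)
  moreover have "eventually (\<lambda>y. (f y - f t) / (y - t) \<le> 0) (at_left t)"
    using eventually_at_left_real[OF \<open>a < t\<close>]
  proof (rule eventually_mono)
    fix y assume "y \<in> {a<..<t}"
    then show "(f y - f t) / (y - t) \<le> 0"
      using before[of y] \<open>f t = 0\<close> by (simp add: divide_pos_neg less_imp_le)
  qed
  ultimately show ?thesis
    by (rule tendsto_upperbound) (simp add: trivial_limit_at_left_real)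
qed

lemma nonneg_invariant_finite_family:
  fixes g g' :: "'i \<Rightarrow> real \<Rightarrow> real" and c :: "'i \<Rightarrow> real"
  assumes "finite I" "is_interval J" "0 \<in> J"
    and deriv: "\<And>i t. i \<in> I \<Longrightarrow> t \<in> J \<Longrightarrow> (g i has_real_derivative g' i t) (at t within J)"
    and init: "\<And>i. i \<in> I \<Longrightarrow> g i 0 \<ge> 0"
    and face: "\<And>i t e. i \<in> I \<Longrightarrow> t \<in> J \<Longrightarrow> 0 < e \<Longrightarrow> e \<le> 1 \<Longrightarrow>
      (\<And>j. j \<in> I \<Longrightarrow> g j t \<ge> -e) \<Longrightarrow> g i t = -e \<Longrightarrow> g' i t \<ge> -c i * e"
    and "i \<in> I" "T \<in> J" "T \<ge> 0"
  shows "g i T \<ge> 0"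
proof -
  define L where "L = (\<Sum>j\<in>I. \<bar>c j\<bar>) + 1"
  have c_le: "\<bar>c j\<bar> \<le> L - 1" if "j \<in> I" for j
    unfolding L_def using \<open>finite I\<close> that by (auto intro: member_le_sum)
  then have "L > 0" using \<open>i \<in> I\<close> by fastforce
  have sub: "{0..T} \<subseteq> J"
    by (intro subsetI mem_is_interval_1_I[OF \<open>is_interval J\<close> \<open>0 \<in> J\<close> \<open>T \<in> J\<close>]) auto
  have perturbed: "g i T + \<epsilon> * exp (L * T) > 0" if "0 < \<epsilon>" "\<epsilon> \<le> exp (- L * T)" for \<epsilon>
  proof (rule ccontr)
    define f where "f j t = g j t + \<epsilon> * exp (L * t)" for j t
    have f_deriv: "(f j has_real_derivative g' j t + L * (\<epsilon> * exp (L * t))) (at t within J)"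
      if "j \<in> I" "t \<in> J" for j t
      unfolding f_def by (intro DERIV_add deriv[OF that]) (auto intro!: derivative_eq_intros)
    have cont: "continuous_on {0..T} (f j)" if "j \<in> I" for j
      using DERIV_continuous_on[OF f_deriv[OF that]] sub by (rule continuous_on_subset)
    have start: "f j 0 > 0" if "j \<in> I" for j
      using init[OF that] \<open>0 < \<epsilon>\<close> by (simp add: f_def)
    have "T \<in> {0..T}" using \<open>T \<ge> 0\<close> by simp
    assume "\<not> g i T + \<epsilon> * exp (L * T) > 0"
    then have "f i T \<le> 0" by (simp add: f_def)
    obtain t\<^sub>1 j where t\<^sub>1: "t\<^sub>1 \<in> {0<..T}" and j: "j \<in> I" "f j t\<^sub>1 = 0"
      and at: "\<And>k. k \<in> I \<Longrightarrow> f k t\<^sub>1 \<ge> 0"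
      and before: "\<And>k s. k \<in> I \<Longrightarrow> s \<in> {0..<t\<^sub>1} \<Longrightarrow> f k s > 0"
      by (rule first_zero_of_finite_family[where f = f,
            OF \<open>finite I\<close> _ _ \<open>i \<in> I\<close> \<open>T \<in> {0..T}\<close> \<open>f i T \<le> 0\<close>])
        (erule cont start | blast)+
    define e where "e = \<epsilon> * exp (L * t\<^sub>1)"
    have "e > 0" using \<open>0 < \<epsilon>\<close> by (simp add: e_def)
    have "e \<le> exp (- L * T) * exp (L * T)"
      unfolding e_def using that t\<^sub>1 \<open>L > 0\<close> by (intro mult_mono) (auto intro: mult_left_mono)
    then have "e \<le> 1" by (simp add: exp_minus)
    have "t\<^sub>1 \<in> J" using t\<^sub>1 sub by auto
    have "g k t\<^sub>1 \<ge> -e" if "k \<in> I" for k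
      using at[OF that] by (simp add: f_def e_def)
    moreover have "g j t\<^sub>1 = -e"
      using j(2) by (simp add: f_def e_def eq_neg_iff_add_eq_0)
    ultimately have "g' j t\<^sub>1 \<ge> -c j * e"
      by (rule face[OF j(1) \<open>t\<^sub>1 \<in> J\<close> \<open>e > 0\<close> \<open>e \<le> 1\<close>])
    moreover have "g' j t\<^sub>1 + L * e \<le> 0"
      unfolding e_def using f_deriv[OF j(1) \<open>t\<^sub>1 \<in> J\<close>]
      by (rule has_real_derivative_nonpos_at_first_zero[where a = 0])
        (use sub t\<^sub>1 j before[OF j(1)] in auto)
    ultimately have "(L - c j) * e \<le> 0" by (simp add: algebra_simps)
    moreover have "L - c j > 0" using c_le[OF j(1)] by linarith
    ultimately show False using \<open>e > 0\<close> by (simp add: mult_le_0_iff)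
  qed
  have "((\<lambda>\<epsilon>. g i T + \<epsilon> * exp (L * T)) \<longlongrightarrow> g i T + 0 * exp (L * T)) (at_right 0)"
    by (intro tendsto_intros)
  moreover have "eventually (\<lambda>\<epsilon>. g i T + \<epsilon> * exp (L * T) \<ge> 0) (at_right 0)"
    using eventually_at_right_real[of 0 "exp (- L * T)"]
    by (rule eventually_mono) (use perturbed in \<open>auto intro: less_imp_le\<close>)
  ultimately show ?thesis
    by (intro tendsto_lowerbound) (auto simp: trivial_limit_at_right_real)
qed

lemma mult_ge_neg_bound:
  fixes x y e B :: real
  assumes "x \<ge> -e" "0 \<le> y" "y \<le> B" "0 \<le> e"
  shows "x * y \<ge> -e * B"
proof -
  have "x * y \<ge> -e * y" using mult_right_mono[OF assms(1,2)] by simp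
  moreover have "-e * y \<ge> -e * B" using assms by (simp add: mult_left_mono)
  ultimately show ?thesis by linarith
qed

lemma mult_ge_neg_bound_both:
  fixes s h e A B :: real
  assumes "s \<ge> -e" "h \<ge> -e" "s \<le> A" "h \<le> B" "0 \<le> e" "0 \<le> A" "0 \<le> B"
  shows "s * h \<ge> -e * (A + B)"
  using assms by (smt (verit, best) mult.commute mult_left_mono_neg mult_right_mono)

lemma mult_le_near_box:
  fixes s h e A B :: real
  assumes "s \<ge> -e" "h \<ge> -e" "s \<le> A + e" "h \<le> B + e" "0 \<le> e" "e \<le> 1" "0 \<le> A" "0 \<le> B"
  shows "s * h \<le> A * B + e * (A + B + 1)"
proof (cases "s \<ge> 0 \<and> h \<ge> 0")
  case True
  then have "s * h \<le> (A + e) * (B + e)" using assms by (intro mult_mono) auto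
  moreover have "e * e \<le> e" using assms by (simp add: mult_left_le)
  ultimately show ?thesis by (simp add: algebra_simps)
next
  case False
  have "s * h \<le> e"
  proof (cases "s < 0 \<and> h < 0")
    case True
    then have "s * h \<le> e * e" using assms by (smt (verit) mult_mono minus_mult_minus)
    also have "\<dots> \<le> e" using assms by (simp add: mult_left_le)
    finally show ?thesis .
  next
    case False
    with \<open>\<not> (s \<ge> 0 \<and> h \<ge> 0)\<close> have "s * h \<le> 0" by (auto simp: mult_le_0_iff)
    with assms show ?thesis by linarith
  qed
  moreover have "e \<le> e * (A + B + 1)" using assms by (simp add: mult_le_cancel_left1)
  moreover have "0 \<le> A * B" using assms by simp
  ultimately show ?thesis by linarith
qed

lemma positive_root_of_monic_quadratic:
  fixes a q :: real
  assumes "q \<ge> 0"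
  defines "x \<equiv> (a + sqrt (a\<^sup>2 + q)) / 2"
  shows "x\<^sup>2 - a * x = q / 4" and "q > 0 \<Longrightarrow> x > 0"
proof -
  have r: "(sqrt (a\<^sup>2 + q))\<^sup>2 = a\<^sup>2 + q" using assms by simp
  show "x\<^sup>2 - a * x = q / 4"
    unfolding x_def using r by (simp add: power2_eq_square field_simps)
  assume "q > 0"
  then have "\<bar>a\<bar> < sqrt (a\<^sup>2 + q)" by (simp add: real_less_rsqrt)
  then show "x > 0" unfolding x_def by (simp add: abs_less_iff)
qed

lemma K3tilde_eq_root:
  "K3tilde \<beta>\<^sub>3 \<delta>\<^sub>3 \<eta> K\<^sub>1 K\<^sub>2 K\<^sub>3 = (a + sqrt (a\<^sup>2 + q)) / 2"
  if "a = (\<beta>\<^sub>3 - \<delta>\<^sub>3) / \<beta>\<^sub>3 * K\<^sub>3" "q = 8 * (\<eta> / \<beta>\<^sub>3) * K\<^sub>1 * K\<^sub>2 * K\<^sub>3"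
  using that by (simp add: K3tilde_def power_mult_distrib power_divide)

locale lichen_system =
  fixes \<beta>\<^sub>2 \<beta>\<^sub>3 \<delta>\<^sub>1 \<delta>\<^sub>2 \<delta>\<^sub>3 \<mu>\<^sub>1 \<mu>\<^sub>2 \<eta> K\<^sub>1 K\<^sub>2 K\<^sub>3 :: real
  assumes pos: "\<beta>\<^sub>2 > 0" "\<beta>\<^sub>3 > 0" "\<delta>\<^sub>1 > 0" "\<delta>\<^sub>2 > 0" "\<delta>\<^sub>3 > 0"
    "\<mu>\<^sub>1 > 0" "\<mu>\<^sub>2 > 0" "\<eta> > 0" "K\<^sub>1 > 0" "K\<^sub>2 > 0" "K\<^sub>3 > 0"
begin

definition host_rate :: "real \<Rightarrow> real \<Rightarrow> real \<Rightarrow> real" where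
  "host_rate h s c = - \<delta>\<^sub>1 * h - \<eta> * s * h + \<mu>\<^sub>1 * c * (1 - h / K\<^sub>1)"

definition symbiont_rate :: "real \<Rightarrow> real \<Rightarrow> real \<Rightarrow> real" where
  "symbiont_rate h s c = \<beta>\<^sub>2 * s * (1 - s / K\<^sub>2) - \<delta>\<^sub>2 * s - \<eta> * s * h + \<mu>\<^sub>2 * c * (1 - s / K\<^sub>2)"

definition complex_rate :: "real \<Rightarrow> real \<Rightarrow> real \<Rightarrow> real" where
  "complex_rate h s c = \<beta>\<^sub>3 * c * (1 - c / K\<^sub>3) - \<delta>\<^sub>3 * c + \<eta> * s * h"

definition complex_bound :: real where
  "complex_bound = K3tilde \<beta>\<^sub>3 \<delta>\<^sub>3 \<eta> K\<^sub>1 K\<^sub>2 K\<^sub>3"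

lemma complex_bound_pos: "complex_bound > 0"
  and complex_rate_at_bound: "complex_rate K\<^sub>1 K\<^sub>2 complex_bound = - \<eta> * K\<^sub>1 * K\<^sub>2"
proof -
  define a where "a = (\<beta>\<^sub>3 - \<delta>\<^sub>3) / \<beta>\<^sub>3 * K\<^sub>3"
  define q where "q = 8 * (\<eta> / \<beta>\<^sub>3) * K\<^sub>1 * K\<^sub>2 * K\<^sub>3"
  have "q > 0" using pos by (simp add: q_def)
  have k: "complex_bound = (a + sqrt (a\<^sup>2 + q)) / 2"
    unfolding complex_bound_def by (rule K3tilde_eq_root) (simp_all add: a_def q_def)
  show "complex_bound > 0"
    unfolding k using positive_root_of_monic_quadratic(2) \<open>q > 0\<close> by simp
  have "complex_bound\<^sup>2 - a * complex_bound = q / 4"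
    unfolding k using positive_root_of_monic_quadratic(1) \<open>q > 0\<close> by simp
  then show "complex_rate K\<^sub>1 K\<^sub>2 complex_bound = - \<eta> * K\<^sub>1 * K\<^sub>2"
    using pos unfolding complex_rate_def a_def q_def by (simp add: field_simps power2_eq_square)
qed

lemma host_rate_lower_face:
  assumes "h = -e" "0 < e" "e \<le> 1" "s \<ge> -e" "c \<ge> -e"
  shows "host_rate h s c \<ge> -(\<eta> + \<mu>\<^sub>1 * (1 + 1 / K\<^sub>1)) * e"
proof -
  have "s * (\<eta> * e) \<ge> -e * \<eta>"
    by (rule mult_ge_neg_bound) (use assms pos in auto)
  moreover have "c * (\<mu>\<^sub>1 * (1 + e / K\<^sub>1)) \<ge> -e * (\<mu>\<^sub>1 * (1 + 1 / K\<^sub>1))"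
    by (rule mult_ge_neg_bound) (use assms pos in \<open>auto simp: divide_right_mono\<close>)
  moreover have "host_rate h s c = \<delta>\<^sub>1 * e + s * (\<eta> * e) + c * (\<mu>\<^sub>1 * (1 + e / K\<^sub>1))"
    using assms(1) by (simp add: host_rate_def algebra_simps)
  moreover have "\<delta>\<^sub>1 * e > 0" using assms pos by simp
  ultimately show ?thesis by (simp add: algebra_simps)
qed

lemma host_rate_upper_face:
  assumes "K\<^sub>1 - h = -e" "0 < e" "e \<le> 1" "s \<ge> -e" "c \<ge> -e"
  shows "- host_rate h s c \<ge> -(\<eta> * (K\<^sub>1 + 1) + \<mu>\<^sub>1 / K\<^sub>1) * e"
proof -
  have h: "h = K\<^sub>1 + e" using assms(1) by simp
  have "s * (\<eta> * (K\<^sub>1 + e)) \<ge> -e * (\<eta> * (K\<^sub>1 + 1))"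
    by (rule mult_ge_neg_bound) (use assms pos in auto)
  moreover have "c * (\<mu>\<^sub>1 * e / K\<^sub>1) \<ge> -e * (\<mu>\<^sub>1 / K\<^sub>1)"
    by (rule mult_ge_neg_bound) (use assms pos in \<open>auto simp: divide_right_mono mult_left_le\<close>)
  moreover have "- host_rate h s c
      = \<delta>\<^sub>1 * (K\<^sub>1 + e) + s * (\<eta> * (K\<^sub>1 + e)) + c * (\<mu>\<^sub>1 * e / K\<^sub>1)"
    using h pos by (simp add: host_rate_def field_simps)
  moreover have "\<delta>\<^sub>1 * (K\<^sub>1 + e) > 0" using assms pos by simp
  ultimately show ?thesis by (simp add: algebra_simps)
qed

lemma symbiont_rate_lower_face:
  assumes "s = -e" "0 < e" "e \<le> 1" "h \<ge> -e" "c \<ge> -e"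
  shows "symbiont_rate h s c \<ge> -(\<beta>\<^sub>2 * (1 + 1 / K\<^sub>2) + \<eta> + \<mu>\<^sub>2 * (1 + 1 / K\<^sub>2)) * e"
proof -
  have "e / K\<^sub>2 \<le> 1 / K\<^sub>2" using assms pos by (simp add: divide_right_mono)
  have "h * (\<eta> * e) \<ge> -e * \<eta>"
    by (rule mult_ge_neg_bound) (use assms pos in auto)
  moreover have "c * (\<mu>\<^sub>2 * (1 + e / K\<^sub>2)) \<ge> -e * (\<mu>\<^sub>2 * (1 + 1 / K\<^sub>2))"
    by (rule mult_ge_neg_bound) (use assms pos \<open>e / K\<^sub>2 \<le> 1 / K\<^sub>2\<close> in auto)
  moreover have "\<beta>\<^sub>2 * e * (1 + e / K\<^sub>2) \<le> \<beta>\<^sub>2 * e * (1 + 1 / K\<^sub>2)"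
    using assms pos \<open>e / K\<^sub>2 \<le> 1 / K\<^sub>2\<close> by (intro mult_left_mono) auto
  moreover have "symbiont_rate h s c
      = - \<beta>\<^sub>2 * e * (1 + e / K\<^sub>2) + \<delta>\<^sub>2 * e + h * (\<eta> * e) + c * (\<mu>\<^sub>2 * (1 + e / K\<^sub>2))"
    using assms(1) by (simp add: symbiont_rate_def algebra_simps)
  moreover have "\<delta>\<^sub>2 * e > 0" using assms pos by simp
  ultimately show ?thesis by (simp add: algebra_simps)
qed

lemma symbiont_rate_upper_face:
  assumes "K\<^sub>2 - s = -e" "0 < e" "e \<le> 1" "h \<ge> -e" "c \<ge> -e"
  shows "- symbiont_rate h s c \<ge> -(\<eta> * (K\<^sub>2 + 1) + \<mu>\<^sub>2 / K\<^sub>2) * e"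
proof -
  have s: "s = K\<^sub>2 + e" using assms(1) by simp
  have "h * (\<eta> * (K\<^sub>2 + e)) \<ge> -e * (\<eta> * (K\<^sub>2 + 1))"
    by (rule mult_ge_neg_bound) (use assms pos in auto)
  moreover have "c * (\<mu>\<^sub>2 * e / K\<^sub>2) \<ge> -e * (\<mu>\<^sub>2 / K\<^sub>2)"
    by (rule mult_ge_neg_bound) (use assms pos in \<open>auto simp: divide_right_mono mult_left_le\<close>)
  moreover have "- symbiont_rate h s c
      = \<beta>\<^sub>2 * (K\<^sub>2 + e) * e / K\<^sub>2 + \<delta>\<^sub>2 * (K\<^sub>2 + e)
        + h * (\<eta> * (K\<^sub>2 + e)) + c * (\<mu>\<^sub>2 * e / K\<^sub>2)"
    using s pos by (simp add: symbiont_rate_def field_simps)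
  moreover have "\<delta>\<^sub>2 * (K\<^sub>2 + e) > 0" "\<beta>\<^sub>2 * (K\<^sub>2 + e) * e / K\<^sub>2 > 0" using assms pos by simp_all
  ultimately show ?thesis by (simp add: algebra_simps)
qed

lemma complex_rate_lower_face:
  assumes "c = -e" "0 < e" "e \<le> 1" "h \<ge> -e" "s \<ge> -e" "h \<le> K\<^sub>1 + e" "s \<le> K\<^sub>2 + e"
  shows "complex_rate h s c \<ge> -(\<beta>\<^sub>3 * (1 + 1 / K\<^sub>3) + \<eta> * (K\<^sub>1 + K\<^sub>2 + 2)) * e"
proof -
  have "e / K\<^sub>3 \<le> 1 / K\<^sub>3" using assms pos by (simp add: divide_right_mono)
  then have "\<beta>\<^sub>3 * e * (1 + e / K\<^sub>3) \<le> \<beta>\<^sub>3 * e * (1 + 1 / K\<^sub>3)"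
    using assms pos by (intro mult_left_mono) auto
  moreover have "s * h \<ge> -e * ((K\<^sub>2 + 1) + (K\<^sub>1 + 1))"
    by (rule mult_ge_neg_bound_both) (use assms pos in auto)
  then have "\<eta> * (s * h) \<ge> \<eta> * (-e * ((K\<^sub>2 + 1) + (K\<^sub>1 + 1)))"
    using pos by (intro mult_left_mono) auto
  moreover have "complex_rate h s c = - \<beta>\<^sub>3 * e * (1 + e / K\<^sub>3) + \<delta>\<^sub>3 * e + \<eta> * (s * h)"
    using assms(1) by (simp add: complex_rate_def algebra_simps)
  moreover have "\<delta>\<^sub>3 * e > 0" using assms pos by simp
  ultimately show ?thesis by (simp add: algebra_simps)
qed

lemma complex_rate_upper_face:
  assumes "complex_bound - c = -e" "0 < e" "e \<le> 1"
    "h \<ge> -e" "s \<ge> -e" "h \<le> K\<^sub>1 + e" "s \<le> K\<^sub>2 + e"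
  shows "- complex_rate h s c \<ge> -(\<bar>\<beta>\<^sub>3 - \<delta>\<^sub>3\<bar> + \<eta> * (K\<^sub>1 + K\<^sub>2 + 1)) * e"
proof -
  let ?k = complex_bound
  have c: "c = ?k + e" using assms(1) by simp
  have "s * h \<le> K\<^sub>2 * K\<^sub>1 + e * (K\<^sub>2 + K\<^sub>1 + 1)"
    by (rule mult_le_near_box) (use assms pos in auto)
  then have "\<eta> * (s * h) \<le> \<eta> * (K\<^sub>2 * K\<^sub>1 + e * (K\<^sub>2 + K\<^sub>1 + 1))"
    using pos by (simp add: mult_left_mono)
  moreover have "\<beta>\<^sub>3 * (?k + e)\<^sup>2 / K\<^sub>3 \<ge> \<beta>\<^sub>3 * ?k\<^sup>2 / K\<^sub>3"
    using assms pos complex_bound_pos by (simp add: divide_right_mono power_mono)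
  moreover have "(\<beta>\<^sub>3 - \<delta>\<^sub>3) * e \<le> \<bar>\<beta>\<^sub>3 - \<delta>\<^sub>3\<bar> * e"
    using assms by (simp add: mult_right_mono)
  moreover have "- complex_rate h s c
      = \<beta>\<^sub>3 * (?k + e)\<^sup>2 / K\<^sub>3 - (\<beta>\<^sub>3 - \<delta>\<^sub>3) * ?k - (\<beta>\<^sub>3 - \<delta>\<^sub>3) * e - \<eta> * (s * h)"
    using c pos by (simp add: complex_rate_def field_simps power2_eq_square)
  moreover have "\<beta>\<^sub>3 * ?k\<^sup>2 / K\<^sub>3 - (\<beta>\<^sub>3 - \<delta>\<^sub>3) * ?k = 2 * \<eta> * K\<^sub>1 * K\<^sub>2"
    using complex_rate_at_bound pos by (simp add: complex_rate_def field_simps power2_eq_square)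
  moreover have "\<eta> * K\<^sub>1 * K\<^sub>2 > 0" using pos by simp
  ultimately show ?thesis by (simp add: algebra_simps)
qed

(* A face is encoded by the signed distance of the solution from it (nonnegative inside the box),
   the derivative of that distance along the system, and the constant of its inward estimate. *)
definition faces ::
    "(real \<Rightarrow> real) \<Rightarrow> (real \<Rightarrow> real) \<Rightarrow> (real \<Rightarrow> real) \<Rightarrow> ((real \<Rightarrow> real) \<times> (real \<Rightarrow> real) \<times> real) set"
  where "faces H S C =
    {(H, \<lambda>t. host_rate (H t) (S t) (C t), \<eta> + \<mu>\<^sub>1 * (1 + 1 / K\<^sub>1)),
     (\<lambda>t. K\<^sub>1 - H t, \<lambda>t. - host_rate (H t) (S t) (C t), \<eta> * (K\<^sub>1 + 1) + \<mu>\<^sub>1 / K\<^sub>1),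
     (S, \<lambda>t. symbiont_rate (H t) (S t) (C t), \<beta>\<^sub>2 * (1 + 1 / K\<^sub>2) + \<eta> + \<mu>\<^sub>2 * (1 + 1 / K\<^sub>2)),
     (\<lambda>t. K\<^sub>2 - S t, \<lambda>t. - symbiont_rate (H t) (S t) (C t), \<eta> * (K\<^sub>2 + 1) + \<mu>\<^sub>2 / K\<^sub>2),
     (C, \<lambda>t. complex_rate (H t) (S t) (C t), \<beta>\<^sub>3 * (1 + 1 / K\<^sub>3) + \<eta> * (K\<^sub>1 + K\<^sub>2 + 2)),
     (\<lambda>t. complex_bound - C t, \<lambda>t. - complex_rate (H t) (S t) (C t),
      \<bar>\<beta>\<^sub>3 - \<delta>\<^sub>3\<bar> + \<eta> * (K\<^sub>1 + K\<^sub>2 + 1))}"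

lemma faces_inward:
  assumes "0 < e" "e \<le> 1" "\<forall>\<psi> \<in> faces H S C. fst \<psi> t \<ge> -e"
  shows "\<forall>\<phi> \<in> faces H S C. fst \<phi> t = -e \<longrightarrow> fst (snd \<phi>) t \<ge> - snd (snd \<phi>) * e"
proof -
  have box: "H t \<ge> -e" "S t \<ge> -e" "C t \<ge> -e"
    "H t \<le> K\<^sub>1 + e" "S t \<le> K\<^sub>2 + e" "C t \<le> complex_bound + e"
    using assms(3) by (auto simp: faces_def)
  show ?thesis
    unfolding faces_def ball_simps(5,7) prod.sel
    using host_rate_lower_face[OF _ assms(1,2) box(2,3)] host_rate_upper_face[OF _ assms(1,2) box(2,3)]
      symbiont_rate_lower_face[OF _ assms(1,2) box(1,3)] symbiont_rate_upper_face[OF _ assms(1,2) box(1,3)]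
      complex_rate_lower_face[OF _ assms(1,2) box(1,2,4,5)]
      complex_rate_upper_face[OF _ assms(1,2) box(1,2,4,5)]
    by blast
qed

lemma faces_derivative:
  assumes "\<phi> \<in> faces H S C" "t \<in> J"
    and "(H has_real_derivative host_rate (H t) (S t) (C t)) (at t within J)"
    and "(S has_real_derivative symbiont_rate (H t) (S t) (C t)) (at t within J)"
    and "(C has_real_derivative complex_rate (H t) (S t) (C t)) (at t within J)"
  shows "(fst \<phi> has_real_derivative fst (snd \<phi>) t) (at t within J)"
  using assms by (auto simp: faces_def intro!: derivative_eq_intros)

theorem box_positively_invariant:
  assumes J: "is_interval J" "0 \<in> J"
    and dH: "\<And>t. t \<in> J \<Longrightarrow> (H has_real_derivative host_rate (H t) (S t) (C t)) (at t within J)"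
    and dS: "\<And>t. t \<in> J \<Longrightarrow> (S has_real_derivative symbiont_rate (H t) (S t) (C t)) (at t within J)"
    and dC: "\<And>t. t \<in> J \<Longrightarrow> (C has_real_derivative complex_rate (H t) (S t) (C t)) (at t within J)"
    and init: "H 0 \<in> {0..K\<^sub>1}" "S 0 \<in> {0..K\<^sub>2}" "C 0 \<in> {0..complex_bound}"
    and "t \<in> J" "t \<ge> 0"
  shows "H t \<in> {0..K\<^sub>1} \<and> S t \<in> {0..K\<^sub>2} \<and> C t \<in> {0..complex_bound}"
proof -
  have "\<forall>\<phi> \<in> faces H S C. fst \<phi> t \<ge> 0"
  proof
    fix \<phi> assume "\<phi> \<in> faces H S C"
    show "fst \<phi> t \<ge> 0"
    proof (rule nonneg_invariant_finite_family[where g = fst and g' = "\<lambda>\<phi>. fst (snd \<phi>)"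
          and c = "\<lambda>\<phi>. snd (snd \<phi>)", OF _ J _ _ _ \<open>\<phi> \<in> faces H S C\<close> \<open>t \<in> J\<close> \<open>t \<ge> 0\<close>])
      show "finite (faces H S C)" by (simp add: faces_def)
      show "(fst \<psi> has_real_derivative fst (snd \<psi>) s) (at s within J)"
        if "\<psi> \<in> faces H S C" "s \<in> J" for \<psi> s
        by (rule faces_derivative[OF that dH[OF that(2)] dS[OF that(2)] dC[OF that(2)]])
      show "fst \<psi> 0 \<ge> 0" if "\<psi> \<in> faces H S C" for \<psi>
        using init that by (auto simp: faces_def)
      show "fst (snd \<psi>) s \<ge> - snd (snd \<psi>) * e"
        if "\<psi> \<in> faces H S C" "0 < e" "e \<le> 1" "\<And>\<omega>. \<omega> \<in> faces H S C \<Longrightarrow> fst \<omega> s \<ge> -e"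
          "fst \<psi> s = -e" for \<psi> s e
        using faces_inward[of e H S C s] that by blast
    qed
  qed
  then show ?thesis
    unfolding faces_def ball_simps(5,7) prod.sel by auto
qed

end

theorem theorem1:
  fixes \<beta>\<^sub>2 \<beta>\<^sub>3 \<delta>\<^sub>1 \<delta>\<^sub>2 \<delta>\<^sub>3 \<mu>\<^sub>1 \<mu>\<^sub>2 \<eta> K\<^sub>1 K\<^sub>2 K\<^sub>3 :: real
    and H S C :: "real \<Rightarrow> real"
    and J :: "real set"
  assumes pos: "\<beta>\<^sub>2 > 0" "\<beta>\<^sub>3 > 0" "\<delta>\<^sub>1 > 0" "\<delta>\<^sub>2 > 0" "\<delta>\<^sub>3 > 0"
      "\<mu>\<^sub>1 > 0" "\<mu>\<^sub>2 > 0" "\<eta> > 0" "K\<^sub>1 > 0" "K\<^sub>2 > 0" "K\<^sub>3 > 0"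
    and J: "is_interval J" "0 \<in> J"
    and dH: "\<And>t. t \<in> J \<Longrightarrow> (H has_real_derivative
        (- \<delta>\<^sub>1 * H t - \<eta> * S t * H t + \<mu>\<^sub>1 * C t * (1 - H t / K\<^sub>1))) (at t within J)"
    and dS: "\<And>t. t \<in> J \<Longrightarrow> (S has_real_derivative
        (\<beta>\<^sub>2 * S t * (1 - S t / K\<^sub>2) - \<delta>\<^sub>2 * S t - \<eta> * S t * H t
          + \<mu>\<^sub>2 * C t * (1 - S t / K\<^sub>2))) (at t within J)"
    and dC: "\<And>t. t \<in> J \<Longrightarrow> (C has_real_derivative
        (\<beta>\<^sub>3 * C t * (1 - C t / K\<^sub>3) - \<delta>\<^sub>3 * C t + \<eta> * S t * H t)) (at t within J)"
    and init: "H 0 \<in> {0..K\<^sub>1}" "S 0 \<in> {0..K\<^sub>2}" "C 0 \<in> {0..K3tilde \<beta>\<^sub>3 \<delta>\<^sub>3 \<eta> K\<^sub>1 K\<^sub>2 K\<^sub>3}"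
  shows "\<forall>t\<in>J. t \<ge> 0 \<longrightarrow>
     H t \<in> {0..K\<^sub>1} \<and> S t \<in> {0..K\<^sub>2} \<and> C t \<in> {0..K3tilde \<beta>\<^sub>3 \<delta>\<^sub>3 \<eta> K\<^sub>1 K\<^sub>2 K\<^sub>3}"
proof -
  interpret lichen_system \<beta>\<^sub>2 \<beta>\<^sub>3 \<delta>\<^sub>1 \<delta>\<^sub>2 \<delta>\<^sub>3 \<mu>\<^sub>1 \<mu>\<^sub>2 \<eta> K\<^sub>1 K\<^sub>2 K\<^sub>3
    using pos by unfold_locales
  show ?thesis
    using box_positively_invariant[OF J] dH dS dC init
    unfolding host_rate_def symbiont_rate_def complex_rate_def complex_bound_def
    by blast
qed

end
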